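(* Consider the model, data and initialization described in the context. Suppose $\delta>0$ and $m\ge 50\log\big(\frac{2(N+NK)}{\delta}\big)$. For all $j\in[N]$ and $k\in\mathcal{B}_j$, with probability at least $1-\delta$, $$|\mathcal{S}^{(0)}_{\mathrm{s},k,j}|\ge 0.4m\quad\text{and}\quad|\mathcal{S}^{(0)}_{\mathrm{r},j,k}|\ge0.4m,$$ where $\mathcal{S}^{(0)}_{\mathrm{s},k,j}=\{i\in[m]:\langle\mathbf{w}^{(0)}_{\mathcal{I}(\mathbf{r}_k),i},\mathbf{s}_j\rangle>0\}$ and $\mathcal{S}^{(0)}_{\mathrm{r},j,k}=\{i\in[m]:\langle\mathbf{w}^{(0)}_{\mathcal{I}(\mathbf{a}_j),i},\mathbf{x}_a(\mathbf{Z}^{(0)},[\mathbf{o}\ \mathbf{s}_j\ \mathbf{r}_k])\rangle>0\}$.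
   Context: Fix $d$ and $m$. Tokens are nonzero, mutually orthogonal vectors in $\mathbb{R}^d$ with indices $\mathcal{I}(\cdot)\in[d]$: a context token $\mathbf{o}$, subjects $\mathbf{s}_1,\dots,\mathbf{s}_N$, answers $\mathbf{a}_1,\dots,\mathbf{a}_N$, relation phrases $\mathbf{r}_k$ for $k$ in a finite set $\mathcal{R}$. $K$ is a positive integer and for each $j\in[N]$, $\mathcal{B}_j\subseteq\mathcal{R}$ is a set of at most $K$ relation indices associated with subject $j$. Parameters $\mathbf{Z}^{(0)}\in\mathbb{R}^{d\times d}$ and $\mathbf{W}^{(0)}\in\mathbb{R}^{dm\times d}$ (rows $\mathbf{w}^{(0)}_{i,k}$, $i\in[d]$, $k\in[m]$) have i.i.d. $\mathcal{N}(0,\sigma_0^2)$ entries, independent of each other. For $\mathbf{X}\in\mathbb{R}^{d\times L}$ with last column $\mathbf{X}[-1]$, $\mathbf{x}_a(\mathbf{Z},\mathbf{X})=\mathbf{X}\,\mathrm{softmax}(\mathbf{X}^\top\mathbf{Z}\mathbf{X}[-1]/\sqrt d)+\mathbf{X}[-1]$, and $[\mathbf{o}\ \mathbf{s}_j\ \mathbf{r}_k]$ denotes column concatenation. *)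

theory Defs
  imports "HOL-Probability.Probability"
begin

text \<open>Labels of the tokens: context token o, subjects s_j, answers a_j, relations r_k.\<close>
datatype 'r tok = TO | TS nat | TA nat | TR 'r

definition tokens :: "nat \<Rightarrow> 'r set \<Rightarrow> 'r tok set" where
  "tokens N R = insert TO (TS ` {1..N} \<union> TA ` {1..N} \<union> TR ` R)"

text \<open>Random initialization entries: W^(0) has rows w_{i,k} (i in the d-type, k < m),
  each a vector in R^d with entries indexed by l; Z^(0) has entries (p,q).\<close>
datatype 'd pkey = WKey 'd nat 'd | ZKey 'd 'd

definition gauss :: "real \<Rightarrow> real measure" where
  "gauss \<sigma> = density lborel (normal_density 0 \<sigma>)"

definition init_keys :: "nat \<Rightarrow> 'd pkey set" where
  "init_keys m = {WKey i k l | i k l. k < m} \<union> {ZKey p q | p q. True}"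

definition init_space :: "real \<Rightarrow> nat \<Rightarrow> ('d pkey \<Rightarrow> real) measure" where
  "init_space \<sigma>0 m = PiM (init_keys m) (\<lambda>_. gauss \<sigma>0)"

definition wrow :: "('d::finite pkey \<Rightarrow> real) \<Rightarrow> 'd \<Rightarrow> nat \<Rightarrow> real^'d" where
  "wrow \<omega> i k = (\<chi> l. \<omega> (WKey i k l))"

definition Zmat :: "('d::finite pkey \<Rightarrow> real) \<Rightarrow> real^'d^'d" where
  "Zmat \<omega> = (\<chi> p q. \<omega> (ZKey p q))"

definition softmax :: "real list \<Rightarrow> real list" where
  "softmax v = map (\<lambda>x. exp x / sum_list (map exp v)) v"

text \<open>x_a(Z,X) = X softmax(X^T Z X[-1] / sqrt d) + X[-1], with X given as its list of columns.\<close>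
definition attn_out :: "real^'d^'d \<Rightarrow> (real^'d::finite) list \<Rightarrow> real^'d" where
  "attn_out Z X =
     (let q = last X;
          p = softmax (map (\<lambda>x. (x \<bullet> (Z *v q)) / sqrt (real CARD('d))) X)
      in sum_list (map2 (\<lambda>c x. c *\<^sub>R x) p X) + q)"

end

theory Submission
  imports Defs
begin

text \<open>For a fixed nonzero vector v, the rows w_{a,i} (i < m) of W^(0) are independent and each
  inner product with v is a centred Gaussian, positive with probability 1/2; Hoeffding's inequality
  bounds the probability that fewer than 0.4m of them are positive by exp(-m/50). In the answer case
  v = x_a(Z^(0), [o s_j r_k]) is random, but it depends only on Z^(0), which is independent of W^(0):
  conditioning on Z^(0) reduces it to the fixed-vector case. There v is nonzero because r_k is
  orthogonal to o and s_j, so that the inner product of x_a with r_k is at least the squared norm of r_k.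
  A union bound over the at most 2NK events and the choice of m conclude.\<close>

lemma prob_space_gauss: "\<sigma> > 0 \<Longrightarrow> prob_space (gauss \<sigma>)"
  unfolding gauss_def by (rule prob_space_normal_density)

lemma sets_gauss [simp, measurable_cong]: "sets (gauss \<sigma>) = sets borel"
  by (simp add: gauss_def)

lemma prob_space_PiM_gauss: "\<sigma> > 0 \<Longrightarrow> prob_space (PiM I (\<lambda>_. gauss \<sigma>))"
  by (intro prob_space_PiM prob_space_gauss)

lemma measure_normal_density_positive:
  assumes "\<sigma> > 0"
  shows "measure (density lborel (normal_density 0 \<sigma>)) {0<..} = 1/2"
proof -
  define D where "D = density lborel (normal_density 0 \<sigma>)"
  interpret D: prob_space D
    unfolding D_def using assms by (rule prob_space_normal_density)
  have sets_D [measurable_cong]: "sets D = sets borel" by (simp add: D_def)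
  have "distr D borel uminus = density (distr lborel borel uminus) (normal_density 0 \<sigma>)"
    unfolding D_def
    by (subst density_distr) (auto simp: normal_density_def intro!: arg_cong2[where f=density])
  then have reflect: "distr D borel uminus = D"
    by (simp add: lborel_distr_uminus D_def)
  have "measure D {..<0} = measure (distr D borel uminus) {..<0}"
    by (simp add: reflect)
  also have "\<dots> = measure D (uminus -` {..<0})"
    by (subst measure_distr) (simp_all add: D_def)
  also have "uminus -` {..<0} = {0::real<..}" by auto
  finally have negative: "measure D {..<0} = measure D {0<..}" .
  have "emeasure D {0} = (\<integral>\<^sup>+ x. ennreal (normal_density 0 \<sigma> x) * indicator {0} x \<partial>lborel)"
    unfolding D_def by (rule emeasure_density) auto
  also have "\<dots> = 0" by (rule nn_integral_null_set) auto
  finally have zero: "measure D {0} = 0" by (simp add: measure_def)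
  have "{..<0} \<union> {0} \<union> {0<..} = space D" by (auto simp: D_def)
  then have "1 = measure D ({..<0} \<union> {0} \<union> {0<..})"
    using D.prob_space by simp
  also have "\<dots> = measure D ({..<0} \<union> {0}) + measure D {0<..}"
    by (rule D.finite_measure_Union) auto
  also have "measure D ({..<0} \<union> {0}) = measure D {..<0} + measure D {0}"
    by (rule D.finite_measure_Union) auto
  finally show ?thesis using negative zero by (simp add: D_def)
qed

lemma indep_vars_PiM_coordinates:
  assumes M: "\<And>i. i \<in> I \<Longrightarrow> prob_space (M i)" and "I \<noteq> {}"
  shows "prob_space.indep_vars (PiM I M) M (\<lambda>i \<omega>. \<omega> i) I"
proof -
  interpret P: prob_space "PiM I M" using M by (rule prob_space_PiM)
  have "distr (PiM I M) (PiM I M) (\<lambda>\<omega>. \<lambda>i\<in>I. \<omega> i) = distr (PiM I M) (PiM I M) (\<lambda>\<omega>. \<omega>)"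
    by (rule distr_cong) (simp_all add: space_PiM PiE_restrict)
  also have "\<dots> = PiM I (\<lambda>i. distr (PiM I M) (M i) (\<lambda>\<omega>. \<omega> i))"
    using M by (simp add: distr_PiM_component cong: PiM_cong)
  finally show ?thesis
    by (subst P.indep_vars_iff_distr_eq_PiM') (simp_all add: \<open>I \<noteq> {}\<close>)
qed

lemma indep_vars_PiM_blocks:
  assumes M: "\<And>i. i \<in> I \<Longrightarrow> prob_space (M i)" and "I \<noteq> {}"
    and "\<And>j. j \<in> J \<Longrightarrow> K j \<subseteq> I" and "disjoint_family_on K J"
    and "\<And>j. j \<in> J \<Longrightarrow> f j \<in> measurable (PiM (K j) M) (N j)"
  shows "prob_space.indep_vars (PiM I M) N (\<lambda>j \<omega>. f j (restrict \<omega> (K j))) J"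
proof -
  interpret P: prob_space "PiM I M" using M by (rule prob_space_PiM)
  have "P.indep_vars (\<lambda>j. PiM (K j) M) (\<lambda>j \<omega>. restrict (\<lambda>i. \<omega> i) (K j)) J"
    using assms by (intro P.indep_vars_restrict[OF indep_vars_PiM_coordinates])
  then show ?thesis
    by (rule P.indep_vars_compose2) (rule assms(5))
qed

lemma distributed_PiM_gauss_coordinate:
  assumes "\<sigma> > 0" and "k \<in> I"
  shows "distributed (PiM I (\<lambda>_. gauss \<sigma>)) lborel (\<lambda>\<omega>. \<omega> k) (normal_density 0 \<sigma>)"
proof -
  have "distr (PiM I (\<lambda>_. gauss \<sigma>)) lborel (\<lambda>\<omega>. \<omega> k) = distr (PiM I (\<lambda>_. gauss \<sigma>)) (gauss \<sigma>) (\<lambda>\<omega>. \<omega> k)"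
    by (rule distr_cong) simp_all
  also have "\<dots> = gauss \<sigma>"
    using assms by (intro distr_PiM_component prob_space_gauss)
  finally show ?thesis
    using measurable_component_singleton[OF \<open>k \<in> I\<close>, of "\<lambda>_. gauss \<sigma>"]
    by (simp add: distributed_def gauss_def cong: measurable_cong_sets)
qed

lemma prob_gauss_linear_combination_pos:
  assumes "\<sigma> > 0" and "finite L" and "inj_on \<kappa> L" and "\<kappa> ` L \<subseteq> I" and "\<exists>l\<in>L. c l \<noteq> 0"
  shows "measure (PiM I (\<lambda>_. gauss \<sigma>))
           {\<omega> \<in> space (PiM I (\<lambda>_. gauss \<sigma>)). (\<Sum>l\<in>L. c l * \<omega> (\<kappa> l)) > 0} = 1/2"
proof -
  let ?P = "PiM I (\<lambda>_. gauss \<sigma>)"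
  interpret P: prob_space ?P using \<open>\<sigma> > 0\<close> by (rule prob_space_PiM_gauss)
  define L' where "L' = {l \<in> L. c l \<noteq> 0}"
  define S where "S = sqrt (\<Sum>l\<in>L'. (\<bar>c l\<bar> * \<sigma>)\<^sup>2)"
  have L': "finite L'" "L' \<noteq> {}" "L' \<subseteq> L"
    using assms unfolding L'_def by (auto intro: finite_subset)
  have sum_L': "(\<Sum>l\<in>L. c l * \<omega> (\<kappa> l)) = (\<Sum>l\<in>L'. c l * \<omega> (\<kappa> l))" for \<omega>
    using \<open>finite L\<close> by (rule sum.mono_neutral_right) (auto simp: L'_def)
  have indep: "P.indep_vars (\<lambda>_. borel) (\<lambda>l \<omega>. (\<lambda>r. c l * r (\<kappa> l)) (restrict \<omega> {\<kappa> l})) L'"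
    using assms L' inj_on_subset[OF \<open>inj_on \<kappa> L\<close> \<open>L' \<subseteq> L\<close>]
    by (intro indep_vars_PiM_blocks prob_space_gauss)
       (auto simp: disjoint_family_on_def inj_on_eq_iff intro!: measurable_component_singleton)
  have "distributed ?P lborel (\<lambda>\<omega>. 0 + c l * \<omega> (\<kappa> l)) (normal_density (0 + c l * 0) (\<bar>c l\<bar> * \<sigma>))"
    if "l \<in> L'" for l
    using that L' assms
    by (intro P.normal_density_affine distributed_PiM_gauss_coordinate) (auto simp: L'_def)
  then have normal: "distributed ?P lborel (\<lambda>\<omega>. \<Sum>l\<in>L'. c l * \<omega> (\<kappa> l)) (normal_density 0 S)"
    using P.sum_indep_normal[OF L'(1,2) indep, of "\<lambda>l. \<bar>c l\<bar> * \<sigma>" "\<lambda>_. 0"] assms(1)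
    by (simp add: L'_def S_def)
  have "measure ?P {\<omega> \<in> space ?P. (\<Sum>l\<in>L. c l * \<omega> (\<kappa> l)) > 0}
      = measure ?P ((\<lambda>\<omega>. \<Sum>l\<in>L'. c l * \<omega> (\<kappa> l)) -` {0<..} \<inter> space ?P)"
    unfolding sum_L' by (rule arg_cong[where f="measure ?P"]) blast
  also have "\<dots> = measure (distr ?P lborel (\<lambda>\<omega>. \<Sum>l\<in>L'. c l * \<omega> (\<kappa> l))) {0<..}"
    using normal by (intro measure_distr[symmetric]) (simp_all add: distributed_def)
  also have "\<dots> = measure (density lborel (normal_density 0 S)) {0<..}"
    using normal by (simp add: distributed_def)
  also have "\<dots> = 1/2"
    using L' assms(1) unfolding S_def
    by (intro measure_normal_density_positive real_sqrt_gt_zero sum_pos) (auto simp: L'_def)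
  finally show ?thesis .
qed

lemma (in prob_space) prob_few_successes_le:
  assumes indep: "indep_vars (\<lambda>_. count_space UNIV) P {..<m}"
    and half: "\<And>i. i < m \<Longrightarrow> prob {\<omega> \<in> space M. P i \<omega>} \<ge> 1/2"
  shows "prob {\<omega> \<in> space M. real (card {i \<in> {..<m}. P i \<omega>}) < 0.4 * real m} \<le> exp (- real m / 50)"
proof (cases "m = 0")
  case False
  define X where "X i \<omega> = (of_bool (P i \<omega>) :: real)" for i \<omega>
  define \<mu> where "\<mu> = (\<Sum>i<m. expectation (X i))"
  have indep_X: "indep_vars (\<lambda>_. borel) X {..<m}"
    unfolding X_def using indep by (rule indep_vars_compose2) simp
  interpret Hoeffding_ineq M "{..<m}" X "\<lambda>_. 0" "\<lambda>_. 1" \<mu>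
    by unfold_locales (auto simp: indep_X X_def \<mu>_def)
  have "expectation (X i) = prob {\<omega> \<in> space M. P i \<omega>}" for i
  proof -
    have "expectation (X i) = expectation (indicator {\<omega> \<in> space M. P i \<omega>})"
      by (rule Bochner_Integration.integral_cong) (auto simp: X_def)
    then show ?thesis by (simp add: Int_absorb2)
  qed
  then have "\<mu> \<ge> real m / 2"
    using sum_mono[of "{..<m}" "\<lambda>_. 1/2" "\<lambda>i. expectation (X i)"] half by (simp add: \<mu>_def)
  then have "prob {\<omega> \<in> space M. (\<Sum>i<m. X i \<omega>) \<le> \<mu> - (\<mu> - 0.4 * real m)}
      \<le> exp (-2 * (\<mu> - 0.4 * real m)\<^sup>2 / (\<Sum>i<m. (1 - 0)\<^sup>2))"
    using False by (intro Hoeffding_ineq_le) auto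
  also have "\<dots> \<le> exp (-2 * (real m / 10)\<^sup>2 / real m)"
    using \<open>\<mu> \<ge> real m / 2\<close> False
    by (simp add: divide_right_mono power_mono)
  also have "\<dots> = exp (- real m / 50)"
    using False by (simp add: power2_eq_square)
  finally have "prob {\<omega> \<in> space M. (\<Sum>i<m. X i \<omega>) \<le> 0.4 * real m} \<le> exp (- real m / 50)"
    by simp
  moreover have "prob {\<omega> \<in> space M. real (card {i \<in> {..<m}. P i \<omega>}) < 0.4 * real m}
      \<le> prob {\<omega> \<in> space M. (\<Sum>i<m. X i \<omega>) \<le> 0.4 * real m}"
  proof (rule finite_measure_mono)
    show "{\<omega> \<in> space M. (\<Sum>i<m. X i \<omega>) \<le> 0.4 * real m} \<in> events"
      by measurable
  qed (auto simp: X_def Int_def)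
  ultimately show ?thesis by linarith
qed simp

text \<open>The paper's S_{s,k,j} is positive_rows \<omega> m (I r_k) s_j, and S_{r,j,k} is
  positive_rows \<omega> m (I a_j) (x_a(Z^(0), [o s_j r_k])).\<close>
definition positive_rows :: "('d::finite pkey \<Rightarrow> real) \<Rightarrow> nat \<Rightarrow> 'd \<Rightarrow> real^'d \<Rightarrow> nat set" where
  "positive_rows \<omega> m a v = {i \<in> {..<m}. wrow \<omega> a i \<bullet> v > 0}"

lemma wrow_inner: "wrow \<omega> a i \<bullet> v = (\<Sum>l\<in>UNIV. v $ l * \<omega> (WKey a i l))"
  by (simp add: inner_vec_def wrow_def mult.commute)

lemma prob_few_positive_rows_le:
  fixes v :: "real^'d::finite"
  assumes "\<sigma> > 0" and rows: "\<And>i l. i < m \<Longrightarrow> WKey a i l \<in> I" and "v \<noteq> 0"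
  shows "measure (PiM I (\<lambda>_. gauss \<sigma>))
           {\<omega> \<in> space (PiM I (\<lambda>_. gauss \<sigma>)). real (card (positive_rows \<omega> m a v)) < 0.4 * real m}
         \<le> exp (- real m / 50)"
proof (cases "m = 0")
  case False
  let ?P = "PiM I (\<lambda>_. gauss \<sigma>)"
  interpret P: prob_space ?P using \<open>\<sigma> > 0\<close> by (rule prob_space_PiM_gauss)
  define K where "K i = range (WKey a i)" for i
  define f where "f i r \<longleftrightarrow> (\<Sum>l\<in>UNIV. v $ l * r (WKey a i l)) > (0::real)" for i r
  have "P.indep_vars (\<lambda>_. count_space UNIV) (\<lambda>i \<omega>. f i (restrict \<omega> (K i))) {..<m}"
    using False rows \<open>\<sigma> > 0\<close>
    by (intro indep_vars_PiM_blocks prob_space_gauss)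
       (auto simp: K_def f_def disjoint_family_on_def)
  then have indep: "P.indep_vars (\<lambda>_. count_space UNIV) (\<lambda>i \<omega>. wrow \<omega> a i \<bullet> v > 0) {..<m}"
    by (rule P.indep_vars_cong[THEN iffD1, rotated 3]) (auto simp: f_def K_def wrow_inner)
  have "P.prob {\<omega> \<in> space ?P. wrow \<omega> a i \<bullet> v > 0} = 1/2" if "i < m" for i
    unfolding wrow_inner using assms that
    by (intro prob_gauss_linear_combination_pos) (auto simp: vec_eq_iff inj_def)
  then show ?thesis
    unfolding positive_rows_def by (intro P.prob_few_successes_le indep) simp
qed (simp add: positive_rows_def)

definition W_keys :: "nat \<Rightarrow> 'd pkey set" where
  "W_keys m = {WKey i k l | i k l. k < m}"

definition Z_keys :: "'d pkey set" where
  "Z_keys = {ZKey p q | p q. True}"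

lemma init_keys_eq: "init_keys m = Z_keys \<union> W_keys m"
  unfolding init_keys_def Z_keys_def W_keys_def by blast

lemma finite_W_keys: "finite (W_keys m :: 'd::finite pkey set)"
proof -
  have "W_keys m = (\<lambda>(i, k, l). WKey i k l) ` (UNIV \<times> {..<m} \<times> (UNIV :: 'd set))"
    by (auto simp: W_keys_def image_iff)
  then show ?thesis by simp
qed

lemma finite_Z_keys: "finite (Z_keys :: 'd::finite pkey set)"
proof -
  have "Z_keys = case_prod ZKey ` (UNIV :: ('d \<times> 'd) set)"
    by (auto simp: Z_keys_def image_iff)
  then show ?thesis
    using finite_imageI[of "UNIV :: ('d \<times> 'd) set" "case_prod ZKey"] by simp
qed

lemma prob_space_init_space: "\<sigma> > 0 \<Longrightarrow> prob_space (init_space \<sigma> m)"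
  unfolding init_space_def by (rule prob_space_PiM_gauss)

lemma measurable_init_coordinate [measurable]: "(\<lambda>\<omega>. \<omega> k) \<in> borel_measurable (init_space \<sigma> m)"
proof (cases "k \<in> init_keys m")
  case True
  then show ?thesis
    unfolding init_space_def by (simp add: measurable_component_singleton cong: measurable_cong_sets)
next
  case False
  then have "\<omega> k = undefined" if "\<omega> \<in> space (init_space \<sigma> m)" for \<omega>
    using that by (auto simp: init_space_def space_PiM PiE_def extensional_def)
  then show ?thesis by (subst measurable_cong[where g="\<lambda>_. undefined"]) auto
qed

lemma measurable_wrow [measurable]: "(\<lambda>\<omega>. wrow \<omega> a i) \<in> borel_measurable (init_space \<sigma> m)"
  by (subst borel_measurable_euclidean_space) (auto simp: Basis_vec_def inner_axis wrow_def)

lemma measurable_Zmat [measurable]: "Zmat \<in> borel_measurable (init_space \<sigma> m)"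
  by (subst borel_measurable_euclidean_space) (auto simp: Basis_vec_def inner_axis Zmat_def)

lemma sets_few_positive_rows:
  fixes g :: "real^'d^'d \<Rightarrow> real^'d::finite"
  assumes [measurable]: "g \<in> borel_measurable borel"
  shows "{\<omega> \<in> space (init_space \<sigma> m). real (card (positive_rows \<omega> m a (g (Zmat \<omega>)))) < 0.4 * real m}
           \<in> sets (init_space \<sigma> m)"
proof -
  have "real (card (positive_rows \<omega> m a v)) = (\<Sum>i<m. of_bool (wrow \<omega> a i \<bullet> v > 0))" for \<omega> v
    by (simp add: positive_rows_def Int_def)
  then show ?thesis by simp
qed

lemma Zmat_merge: "Zmat (merge Z_keys (W_keys m) (z, w)) = Zmat z"
  by (simp add: Zmat_def merge_def Z_keys_def)

lemma positive_rows_merge: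
  "positive_rows (merge Z_keys (W_keys m) (z, w)) m a v = positive_rows w m a v"
  by (auto simp: positive_rows_def wrow_def merge_def W_keys_def Z_keys_def)

lemma prob_few_positive_rows_init_le:
  fixes g :: "real^'d^'d \<Rightarrow> real^'d::finite"
  assumes "\<sigma> > 0" and g: "g \<in> borel_measurable borel" and "\<And>Z. g Z \<noteq> 0"
  shows "measure (init_space \<sigma> m)
           {\<omega> \<in> space (init_space \<sigma> m). real (card (positive_rows \<omega> m a (g (Zmat \<omega>)))) < 0.4 * real m}
         \<le> exp (- real m / 50)"
proof -
  let ?M = "\<lambda>_::'d pkey. gauss \<sigma>"
  let ?P = "init_space \<sigma> m"
  let ?W = "PiM (W_keys m) ?M"
  let ?Z = "PiM Z_keys ?M"
  define A where "A = {\<omega> \<in> space ?P. real (card (positive_rows \<omega> m a (g (Zmat \<omega>)))) < 0.4 * real m}"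
  have P_eq: "?P = PiM (Z_keys \<union> W_keys m) ?M" by (simp add: init_space_def init_keys_eq)
  interpret P: prob_space ?P using \<open>\<sigma> > 0\<close> by (rule prob_space_init_space)
  interpret Z: prob_space ?Z using \<open>\<sigma> > 0\<close> by (rule prob_space_PiM_gauss)
  interpret W: prob_space ?W using \<open>\<sigma> > 0\<close> by (rule prob_space_PiM_gauss)
  interpret product_sigma_finite ?M
    using prob_space_gauss[OF \<open>\<sigma> > 0\<close>]
    by (simp add: product_sigma_finite_def prob_space_imp_sigma_finite)
  have disjoint: "Z_keys \<inter> W_keys m = {}" by (auto simp: Z_keys_def W_keys_def)
  have "A \<in> sets (PiM (Z_keys \<union> W_keys m) ?M)"
    unfolding A_def P_eq[symmetric] using g by (rule sets_few_positive_rows)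
  txt \<open>Fubini over the split into Z- and W-coordinates: once the Z-part is fixed,
    g (Zmat \<omega>) is a fixed nonzero vector.\<close>
  then have "emeasure ?P A
      = (\<integral>\<^sup>+z. emeasure ?W ((\<lambda>w. merge Z_keys (W_keys m) (z, w)) -` A \<inter> space ?W) \<partial>?Z)"
    unfolding P_eq by (rule emeasure_fold_integral[OF disjoint finite_Z_keys finite_W_keys])
  also have "\<dots> \<le> (\<integral>\<^sup>+z. exp (- real m / 50) \<partial>?Z)"
  proof (rule nn_integral_mono)
    fix z assume z: "z \<in> space ?Z"
    have "merge Z_keys (W_keys m) (z, w) \<in> space ?P" if "w \<in> space ?W" for w
      using z that disjoint by (auto simp: P_eq space_PiM PiE_iff gauss_def)
    then have "(\<lambda>w. merge Z_keys (W_keys m) (z, w)) -` A \<inter> space ?W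
        = {w \<in> space ?W. real (card (positive_rows w m a (g (Zmat z)))) < 0.4 * real m}"
      unfolding A_def by (auto simp: Zmat_merge positive_rows_merge)
    moreover have "measure ?W \<dots> \<le> exp (- real m / 50)"
      using assms by (intro prob_few_positive_rows_le) (auto simp: W_keys_def)
    ultimately show "emeasure ?W ((\<lambda>w. merge Z_keys (W_keys m) (z, w)) -` A \<inter> space ?W)
        \<le> exp (- real m / 50)"
      by (simp add: W.emeasure_eq_measure)
  qed
  also have "\<dots> = exp (- real m / 50)"
    by (simp add: Z.emeasure_space_1)
  finally show ?thesis
    unfolding A_def[symmetric] by (simp add: P.emeasure_eq_measure)
qed

lemma attn_out_eq_sum:
  fixes Z :: "real^'d^'d::finite" and X :: "(real^'d) list"
  defines "e \<equiv> \<lambda>x. exp (x \<bullet> (Z *v last X) / sqrt (real CARD('d)))"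
  shows "attn_out Z X = (\<Sum>n<length X. (e (X ! n) / (\<Sum>k<length X. e (X ! k))) *\<^sub>R X ! n) + last X"
  by (simp add: attn_out_def softmax_def Let_def zip_map1 zip_same_conv_map sum_list_sum_nth
      atLeast0LessThan e_def o_def)

lemma inner_attn_out_last_ge:
  fixes X :: "(real^'d::finite) list"
  assumes "\<And>x. x \<in> set X \<Longrightarrow> 0 \<le> x \<bullet> last X"
  shows "last X \<bullet> last X \<le> attn_out Z X \<bullet> last X"
proof -
  define e where "e x = exp (x \<bullet> (Z *v last X) / sqrt (real CARD('d)))" for x
  define S where "S = (\<Sum>k<length X. e (X ! k))"
  have "attn_out Z X \<bullet> last X = (\<Sum>n<length X. (e (X ! n) / S) *\<^sub>R X ! n \<bullet> last X) + last X \<bullet> last X"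
    unfolding attn_out_eq_sum S_def e_def by (simp only: inner_add_left inner_sum_left)
  moreover have "0 \<le> (\<Sum>n<length X. (e (X ! n) / S) *\<^sub>R X ! n \<bullet> last X)"
    using assms by (intro sum_nonneg) (simp add: S_def e_def sum_nonneg)
  ultimately show ?thesis by linarith
qed

lemma attn_out_nonzero:
  assumes "last X \<noteq> 0" and "\<And>x. x \<in> set X \<Longrightarrow> 0 \<le> x \<bullet> last X"
  shows "attn_out Z X \<noteq> 0"
  using inner_attn_out_last_ge[OF assms(2), of Z] assms(1)
  by (metis inner_gt_zero_iff inner_zero_left not_le)

lemma continuous_on_attn_out:
  fixes X :: "(real^'d::finite) list"
  shows "continuous_on UNIV (\<lambda>Z. attn_out Z X)"
proof (cases "X = []")
  case False
  then have "(\<Sum>k<length X. exp (X ! k \<bullet> (Z *v last X) / sqrt (real CARD('d)))) \<noteq> 0" for Z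
    by (intro order.strict_implies_not_eq[symmetric] sum_pos) auto
  then show ?thesis
    unfolding attn_out_eq_sum matrix_vector_mult_def
    by (intro continuous_intros) auto
qed (simp add: attn_out_eq_sum)

lemma events_few_positive_rows_in_context:
  fixes x\<^sub>o x\<^sub>s x\<^sub>r :: "real^'d::finite" and a b :: 'd and \<sigma> :: real and m :: nat
  assumes "\<sigma> > 0" and "x\<^sub>s \<noteq> 0" and "x\<^sub>r \<noteq> 0" and "x\<^sub>o \<bullet> x\<^sub>r = 0" and "x\<^sub>s \<bullet> x\<^sub>r = 0"
  defines "E \<equiv> {\<omega> \<in> space (init_space \<sigma> m).
      real (card (positive_rows \<omega> m a x\<^sub>s)) < 0.4 * real m
    \<or> real (card (positive_rows \<omega> m b (attn_out (Zmat \<omega>) [x\<^sub>o, x\<^sub>s, x\<^sub>r]))) < 0.4 * real m}"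
  shows "E \<in> sets (init_space \<sigma> m)" and "measure (init_space \<sigma> m) E \<le> 2 * exp (- real m / 50)"
proof -
  let ?P = "init_space \<sigma> m"
  define E\<^sub>s where "E\<^sub>s = {\<omega> \<in> space ?P. real (card (positive_rows \<omega> m a x\<^sub>s)) < 0.4 * real m}"
  define E\<^sub>r where "E\<^sub>r = {\<omega> \<in> space ?P.
    real (card (positive_rows \<omega> m b (attn_out (Zmat \<omega>) [x\<^sub>o, x\<^sub>s, x\<^sub>r]))) < 0.4 * real m}"
  have attn_nonzero: "attn_out Z [x\<^sub>o, x\<^sub>s, x\<^sub>r] \<noteq> 0" for Z
    using assms by (intro attn_out_nonzero) auto
  have attn_measurable: "(\<lambda>Z. attn_out Z [x\<^sub>o, x\<^sub>s, x\<^sub>r]) \<in> borel_measurable borel"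
    by (intro borel_measurable_continuous_onI continuous_on_attn_out)
  have "E\<^sub>s \<in> sets ?P"
    unfolding E\<^sub>s_def by (rule sets_few_positive_rows) simp
  moreover have "E\<^sub>r \<in> sets ?P"
    unfolding E\<^sub>r_def using attn_measurable by (rule sets_few_positive_rows)
  moreover have "measure ?P E\<^sub>s \<le> exp (- real m / 50)"
    unfolding E\<^sub>s_def using \<open>\<sigma> > 0\<close> _ \<open>x\<^sub>s \<noteq> 0\<close>
    by (rule prob_few_positive_rows_init_le) simp
  moreover have "measure ?P E\<^sub>r \<le> exp (- real m / 50)"
    unfolding E\<^sub>r_def using \<open>\<sigma> > 0\<close> attn_measurable attn_nonzero
    by (rule prob_few_positive_rows_init_le)
  moreover have "E = E\<^sub>s \<union> E\<^sub>r"
    by (auto simp: E_def E\<^sub>s_def E\<^sub>r_def)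
  ultimately show "E \<in> sets ?P" and "measure ?P E \<le> 2 * exp (- real m / 50)"
    using measure_Un_le[of E\<^sub>s ?P E\<^sub>r] by auto
qed

lemma (in prob_space) prob_Diff_UN_ge:
  assumes "finite J" and "\<And>j. j \<in> J \<Longrightarrow> E j \<in> events" and "\<And>j. j \<in> J \<Longrightarrow> prob (E j) \<le> \<epsilon>"
  shows "prob (space M - (\<Union>j\<in>J. E j)) \<ge> 1 - real (card J) * \<epsilon>"
proof -
  have "prob (\<Union>j\<in>J. E j) \<le> (\<Sum>j\<in>J. prob (E j))"
    using assms by (intro finite_measure_subadditive_finite) auto
  also have "\<dots> \<le> real (card J) * \<epsilon>"
    using sum_mono[OF assms(3)] by simp
  finally show ?thesis
    using assms by (simp add: prob_compl sets.finite_UN)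
qed

lemma card_Sigma_le:
  assumes "finite A" and "\<And>a. a \<in> A \<Longrightarrow> finite (B a)" and "\<And>a. a \<in> A \<Longrightarrow> card (B a) \<le> K"
  shows "card (Sigma A B) \<le> card A * K"
  using assms sum_bounded_above[of A "\<lambda>a. card (B a)" K] by (simp add: card_SigmaI)

lemma union_bound_le_of_sample_size:
  fixes N K m c :: nat
  assumes "\<delta> > 0" and "c \<le> N * K" and "real m \<ge> 50 * ln (2 * (real N + real N * real K) / \<delta>)"
  shows "real c * (2 * exp (- real m / 50)) \<le> \<delta>"
proof (cases "N * K = 0")
  case False
  define T where "T = 2 * (real N + real N * real K)"
  have "T > 0" "2 * real (N * K) \<le> T"
    using False by (auto simp: T_def add_pos_nonneg)
  have "exp (- real m / 50) \<le> exp (ln (\<delta> / T))"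
    using assms \<open>T > 0\<close> by (simp add: T_def ln_div)
  also have "\<dots> = \<delta> / T"
    using \<open>\<delta> > 0\<close> \<open>T > 0\<close> by simp
  finally have "real c * (2 * exp (- real m / 50)) \<le> real (N * K) * (2 * (\<delta> / T))"
    using of_nat_mono[OF \<open>c \<le> N * K\<close>] \<open>\<delta> > 0\<close> \<open>T > 0\<close> by (intro mult_mono) auto
  also have "\<dots> = (2 * real (N * K)) * (\<delta> / T)"
    by simp
  also have "\<dots> \<le> T * (\<delta> / T)"
    using \<open>2 * real (N * K) \<le> T\<close> \<open>\<delta> > 0\<close> \<open>T > 0\<close> by (intro mult_right_mono) auto
  finally show ?thesis
    using \<open>T > 0\<close> by simp
next
  case True
  then have "c = 0"
    using \<open>c \<le> N * K\<close> by auto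
  then show ?thesis
    using \<open>\<delta> > 0\<close> by simp
qed

theorem lemma6:
  fixes tv :: "'r tok \<Rightarrow> real^'d::finite"
    and I :: "'r tok \<Rightarrow> 'd"
    and N K m :: nat
    and R :: "'r set"
    and B :: "nat \<Rightarrow> 'r set"
    and \<sigma>0 \<delta> :: real
  assumes nonzero: "\<And>t. t \<in> tokens N R \<Longrightarrow> tv t \<noteq> 0"
    and orth: "\<And>t t'. t \<in> tokens N R \<Longrightarrow> t' \<in> tokens N R \<Longrightarrow> t \<noteq> t' \<Longrightarrow> tv t \<bullet> tv t' = 0"
    and finR: "finite R"
    and Kpos: "K > 0"
    and B_sub: "\<And>j. j \<in> {1..N} \<Longrightarrow> B j \<subseteq> R"
    and B_card: "\<And>j. j \<in> {1..N} \<Longrightarrow> card (B j) \<le> K"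
    and sigma_pos: "\<sigma>0 > 0"
    and delta_pos: "\<delta> > 0"
    and m_large: "real m \<ge> 50 * ln (2 * (real N + real N * real K) / \<delta>)"
  shows "measure (init_space \<sigma>0 m)
           {\<omega> \<in> space (init_space \<sigma>0 m).
              \<forall>j\<in>{1..N}. \<forall>k\<in>B j.
                 real (card {i \<in> {..<m}. wrow \<omega> (I (TR k)) i \<bullet> tv (TS j) > 0}) \<ge> 0.4 * real m
               \<and> real (card {i \<in> {..<m}. wrow \<omega> (I (TA j)) i \<bullet>
                    attn_out (Zmat \<omega>) [tv TO, tv (TS j), tv (TR k)] > 0}) \<ge> 0.4 * real m}
         \<ge> 1 - \<delta>"
proof -
  let ?P = "init_space \<sigma>0 m" and ?J = "Sigma {1..N} B"
  define E where "E = (\<lambda>(j, k). {\<omega> \<in> space ?P.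
      real (card (positive_rows \<omega> m (I (TR k)) (tv (TS j)))) < 0.4 * real m
    \<or> real (card (positive_rows \<omega> m (I (TA j)) (attn_out (Zmat \<omega>) [tv TO, tv (TS j), tv (TR k)])))
        < 0.4 * real m})"
  interpret P: prob_space ?P using sigma_pos by (rule prob_space_init_space)
  have finite_B: "finite (B j)" if "j \<in> {1..N}" for j
    using B_sub[OF that] finR by (rule finite_subset)
  have "E jk \<in> P.events \<and> P.prob (E jk) \<le> 2 * exp (- real m / 50)" if "jk \<in> ?J" for jk
  proof -
    obtain j k where jk: "jk = (j, k)" and "TO \<in> tokens N R" "TS j \<in> tokens N R" "TR k \<in> tokens N R"
      using \<open>jk \<in> ?J\<close> B_sub by (cases jk) (force simp: tokens_def)
    then show ?thesis
      unfolding jk E_def prod.case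
      by (intro conjI events_few_positive_rows_in_context[OF sigma_pos]) (simp_all add: nonzero orth)
  qed
  then have "P.prob (space ?P - (\<Union>jk\<in>?J. E jk)) \<ge> 1 - real (card ?J) * (2 * exp (- real m / 50))"
    using finite_B by (intro P.prob_Diff_UN_ge finite_SigmaI) auto
  moreover have "card ?J \<le> N * K"
    using card_Sigma_le[of "{1..N}" B K] finite_B B_card by simp
  moreover have "space ?P - (\<Union>jk\<in>?J. E jk) = {\<omega> \<in> space ?P. \<forall>j\<in>{1..N}. \<forall>k\<in>B j.
      real (card {i \<in> {..<m}. wrow \<omega> (I (TR k)) i \<bullet> tv (TS j) > 0}) \<ge> 0.4 * real m
    \<and> real (card {i \<in> {..<m}. wrow \<omega> (I (TA j)) i \<bullet>
        attn_out (Zmat \<omega>) [tv TO, tv (TS j), tv (TR k)] > 0}) \<ge> 0.4 * real m}"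
    unfolding E_def positive_rows_def by (auto simp flip: not_le)
  ultimately show ?thesis
    using union_bound_le_of_sample_size[OF delta_pos _ m_large] by fastforce
qed

end
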